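(* Let $w=a_1\cdots a_n$ be a word over $\{a,b\}$ with $a_1=a_n$. If deleting some $k$ letters from $w$ yields a palindrome, then one can obtain a palindrome by deleting some $l\le k$ letters from $w$ in such a way that the letters $a_1$ and $a_n$ are not deleted.
   Context: A word is a finite word over the two-letter alphabet $\{a,b\}$. A word $w=a_1\cdots a_n$ is a palindrome if $a_i=a_{n-i+1}$ for all $i\le n$. *)

theory Defs
  imports Main
begin

datatype letter = a | b

type_synonym word = "letter list"

definition palindrome :: "word \<Rightarrow> bool" where
  "palindrome w \<longleftrightarrow> (\<forall>i < length w. w ! i = w ! (length w - 1 - i))"

definition delete_positions :: "word \<Rightarrow> nat set \<Rightarrow> word" where
  "delete_positions w D = nths w ({..<length w} - D)"

end

theory Submission
  imports Defs "HOL-Library.Sublist"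
begin

text \<open>Work with subsequences instead of deletion sets. Let p be a palindromic subsequence
of w = c u c. Either p has at most one letter, or p = x m x with m a palindrome. If x = c,
drop the outer letters of p and put back those of w: c m c is as long as p and m lies
inside u. If x \<noteq> c, the first and last letters of p cannot use the two letters c of w,
so p itself lies inside u and c p c is even longer.\<close>

lemma palindrome_iff_rev: "palindrome w \<longleftrightarrow> rev w = w"
proof -
  have "rev w ! i = w ! (length w - 1 - i)" if "i < length w" for i
    using that by (simp add: rev_nth)
  then show ?thesis
    unfolding palindrome_def list_eq_iff_nth_eq by (metis length_rev)
qed

lemma rev_eq_self_Cons_snoc:
  assumes "rev p = p" and "2 \<le> length p"
  obtains x m where "p = x # m @ [x]" and "rev m = m"
proof -
  obtain x r where p: "p = x # r"
    using assms(2) by (cases p) auto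
  with assms(2) have "r \<noteq> []"
    by auto
  then obtain m y where r: "r = m @ [y]"
    by (cases r rule: rev_exhaust) auto
  have "y # rev m @ [x] = x # m @ [y]"
    using assms(1) by (simp only: p r rev.simps rev_append append.simps)
  then have "y = x" and "rev m @ [x] = m @ [y]"
    by (metis list.inject)+
  then have "rev m = m"
    by simp
  with p r \<open>y = x\<close> show thesis
    using that by blast
qed

lemma subseq_rev: "subseq xs ys \<Longrightarrow> subseq (rev xs) (rev ys)"
  by (induction rule: list_emb.induct) (auto intro: list_emb_append_mono subseq_rev_drop_many)

lemma subseq_snoc_neq:
  assumes "subseq (xs @ [x]) (ys @ [y])" and "x \<noteq> y"
  shows "subseq (xs @ [x]) ys"
proof -
  from subseq_rev [OF assms(1)] have "subseq (x # rev xs) (y # rev ys)"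
    by simp
  then have "subseq (x # rev xs) (rev ys)"
    using assms(2) by (rule subseq_Cons2_neq)
  from subseq_rev [OF this] show ?thesis
    by simp
qed

lemma palindrome_subseq_between_ends:
  assumes "rev p = p" and "subseq p (c # u @ [c])"
  obtains q where "subseq q u" and "rev q = q" and "length p \<le> length q + 2"
proof (cases "2 \<le> length p")
  case False
  then show thesis
    using that [of "[]"] by simp
next
  case True
  with assms(1) obtain x m where p: "p = x # m @ [x]" and "rev m = m"
    by (rule rev_eq_self_Cons_snoc)
  show thesis
  proof (cases "x = c")
    case True
    with assms(2) p have "subseq m u"
      by simp
    with \<open>rev m = m\<close> p show thesis
      using that by simp
  next
    case False
    with assms(2) p have "subseq ((x # m) @ [x]) (u @ [c])"
      by simp
    then have "subseq ((x # m) @ [x]) u"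
      using False by (rule subseq_snoc_neq)
    then have "subseq p u"
      by (simp add: p)
    with assms(1) show thesis
      using that by simp
  qed
qed

lemma nths_inter_lessThan: "nths xs (A \<inter> {..<length xs}) = nths xs A"
  by (auto simp: nths_def set_zip intro!: arg_cong[where f = "map fst"] filter_cong)

lemma length_delete_positions:
  assumes "D \<subseteq> {..<length w}"
  shows "length (delete_positions w D) = length w - card D"
proof -
  have "{i. i < length w \<and> i \<in> {..<length w} - D} = {..<length w} - D"
    by auto
  with assms show ?thesis
    by (simp add: delete_positions_def length_nths card_Diff_subset finite_subset)
qed

lemma subseq_delete_positions: "subseq (delete_positions w D) w"
  unfolding delete_positions_def subseq_conv_nths by blast

lemma subseq_imp_delete_positions:
  assumes "subseq q w"
  obtains E where "E \<subseteq> {..<length w}" and "delete_positions w E = q"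
proof -
  obtain N where q: "q = nths w N"
    using assms subseq_conv_nths by blast
  show thesis
  proof (rule that)
    show "{..<length w} - N \<subseteq> {..<length w}"
      by blast
    have "{..<length w} - ({..<length w} - N) = N \<inter> {..<length w}"
      by blast
    then show "delete_positions w ({..<length w} - N) = q"
      unfolding delete_positions_def q by (simp only: nths_inter_lessThan)
  qed
qed

lemma delete_positions_Cons_snoc:
  assumes "E \<subseteq> {..<length u}"
  shows "delete_positions (x # u @ [y]) (Suc ` E) = x # delete_positions u E @ [y]"
proof -
  have "{j. Suc j \<in> {..<length (x # u @ [y])} - Suc ` E} \<inter> {..<length u}
        = ({..<length u} - E) \<inter> {..<length u}"
    by auto
  then have "nths u {j. Suc j \<in> {..<length (x # u @ [y])} - Suc ` E} = delete_positions u E"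
    by (metis delete_positions_def nths_inter_lessThan)
  moreover have "Suc (length u) \<notin> Suc ` E"
    using assms by auto
  ultimately show ?thesis
    by (simp add: delete_positions_def nths_Cons nths_append)
qed

lemma subseq_imp_delete_positions_Cons_snoc:
  assumes "subseq q u"
  obtains E where "E \<subseteq> {..<length u + 2}" and "0 \<notin> E" and "length u + 1 \<notin> E"
    and "card E = length u - length q" and "delete_positions (x # u @ [y]) E = x # q @ [y]"
proof -
  obtain F where F: "F \<subseteq> {..<length u}" "delete_positions u F = q"
    using assms by (rule subseq_imp_delete_positions)
  show thesis
  proof (rule that)
    show "Suc ` F \<subseteq> {..<length u + 2}" "0 \<notin> Suc ` F" "length u + 1 \<notin> Suc ` F"
      using F(1) by auto
    have "card F \<le> length u"
      using F(1) by (metis card_lessThan card_mono finite_lessThan)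
    with F show "card (Suc ` F) = length u - length q"
      using length_delete_positions [OF F(1)] by (simp add: card_image)
    show "delete_positions (x # u @ [y]) (Suc ` F) = x # q @ [y]"
      using F by (simp add: delete_positions_Cons_snoc)
  qed
qed

lemma hd_eq_last_cases:
  assumes "w \<noteq> []" and "hd w = last w"
  obtains "w = [hd w]" | u where "w = hd w # u @ [hd w]"
proof (cases "tl w" rule: rev_exhaust)
  case Nil
  with assms(1) show thesis
    using that(1) by (cases w) auto
next
  case (snoc u y)
  with assms have "w = hd w # u @ [hd w]"
    by (cases w) auto
  then show thesis
    by (rule that(2))
qed

theorem lemma2:
  fixes w :: word and k :: nat and D :: "nat set"
  assumes "w \<noteq> []"
    and "hd w = last w"
    and "D \<subseteq> {..<length w}"
    and "card D = k"
    and "palindrome (delete_positions w D)"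
  shows "\<exists>E. E \<subseteq> {..<length w} \<and> card E \<le> k \<and> 0 \<notin> E \<and> length w - 1 \<notin> E
           \<and> palindrome (delete_positions w E)"
  using assms(1,2)
proof (cases rule: hd_eq_last_cases)
  case 1
  then have "rev w = w"
    by (metis rev_singleton_conv)
  then have "palindrome (delete_positions w {})"
    by (simp add: delete_positions_def nths_all palindrome_iff_rev)
  then show ?thesis
    by (intro exI [of _ "{}"]) simp
next
  case (2 u)
  define c p where "c = hd w" and "p = delete_positions w D"
  have w: "w = c # u @ [c]"
    using 2 c_def by simp
  have "rev p = p" and "subseq p (c # u @ [c])"
    using assms(5) subseq_delete_positions [of w D] by (simp_all add: p_def palindrome_iff_rev w)
  then obtain q where "subseq q u" "rev q = q" and long: "length p \<le> length q + 2"
    by (rule palindrome_subseq_between_ends)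
  obtain E where E: "E \<subseteq> {..<length u + 2}" "0 \<notin> E" "length u + 1 \<notin> E"
      "card E = length u - length q" "delete_positions w E = c # q @ [c]"
    using \<open>subseq q u\<close> unfolding w by (rule subseq_imp_delete_positions_Cons_snoc)
  have "length p = length w - k"
    using assms(3,4) by (simp add: p_def length_delete_positions)
  with long E(4) w have "card E \<le> k"
    by simp
  moreover have "palindrome (delete_positions w E)"
    using E(5) \<open>rev q = q\<close> by (simp add: palindrome_iff_rev)
  ultimately show ?thesis
    using E(1-3) w by auto
qed

end
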